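(* Let $M\in\mathbb R^{\mathbb N\times\mathbb N}$, let $\mathbb N=\bigcup_{\ell\in\mathbb N}B_\ell$ be a partition, $0<q<1$, $C>0$, $\varepsilon>0$ and $r\in\mathbb N$, such that: $|M_{ij}|\le Cq^{(1/2+\varepsilon)|\ell-k|}$ for all $i\in B_\ell$, $j\in B_k$; for all $i\in B_\ell$, $\#\{j\in B_k:M_{ij}\ne0\}\le Cq^{\min\{k,\ell\}-k}$; for all $j\in B_k$, $\#\{i\in B_\ell:M_{ij}\ne0\}\le Cq^{\min\{k,\ell\}-\ell}$; and $M_{ij}=0$ whenever $i\in B_\ell$, $j\in B_k$ with $|\ell-k|\le r$. Then \[\|M\|_2\le C_{\rm geo}q^{\varepsilon r},\] where $C_{\rm geo}>0$ depends only on $C$ and $q$.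
   Context: $\|\cdot\|_2$ is the operator norm on $\ell_2$.
   Formalization: The constant $C_{\rm geo}$ may depend on $\varepsilon$ as well as on C and q, and is uniform only over M, the partition and r. The statement above fails without it. *)

theory Defs
  imports "HOL-Analysis.Analysis"
begin

text \<open>The operator norm on l2 is the infimum of all constants c >= 0 such that
M maps every l2 sequence x to an l2 sequence with norm at most c times the
norm of x (value infinity if no such c exists).\<close>

definition l2_seq :: "(nat \<Rightarrow> real) \<Rightarrow> bool" where
  "l2_seq x \<longleftrightarrow> summable (\<lambda>j. (x j)^2)"

definition l2_norm_sq :: "(nat \<Rightarrow> real) \<Rightarrow> real" where
  "l2_norm_sq x = (\<Sum>j. (x j)^2)"

definition mat_apply :: "(nat \<Rightarrow> nat \<Rightarrow> real) \<Rightarrow> (nat \<Rightarrow> real) \<Rightarrow> nat \<Rightarrow> real" where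
  "mat_apply M x i = (\<Sum>j. M i j * x j)"

definition l2_opnorm :: "(nat \<Rightarrow> nat \<Rightarrow> real) \<Rightarrow> ereal" where
  "l2_opnorm M = Inf {ereal c | c. c \<ge> 0 \<and>
     (\<forall>x. l2_seq x \<longrightarrow>
        (\<forall>i. summable (\<lambda>j. M i j * x j)) \<and>
        l2_seq (mat_apply M x) \<and>
        sqrt (l2_norm_sq (mat_apply M x)) \<le> c * sqrt (l2_norm_sq x))}"

end

theory Submission
  imports Defs
begin

text \<open>Schur test with the weights \<open>p j = q^(blk j / 2)\<close>. In row \<open>i\<close> (block \<open>l\<close>), block
\<open>k\<close> holds at most \<open>C q^(min k l - k)\<close> nonzero entries, each at most
\<open>C q^((1/2 + \<epsilon>) |l - k|)\<close>; together with the weight \<open>q^(k/2)\<close> the exponents add up to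
\<open>l/2 + \<epsilon> |l - k|\<close> in both cases \<open>k \<le> l\<close> and \<open>l \<le> k\<close>. So the weighted row sum is at
most \<open>C\<^sup>2 q^(l/2)\<close> times a two-sided geometric series in \<open>q^\<epsilon>\<close> over \<open>|l - k| > r\<close>, i.e.
\<open>2 C\<^sup>2 q^(\<epsilon> r) / (1 - q^\<epsilon>)\<close> times \<open>p i\<close>. The column conditions are the row conditions of
the transpose, and the Schur test bounds the operator norm by the same constant.\<close>

lemma weighted_Cauchy_Schwarz_sum:
  fixes a p y :: "'a \<Rightarrow> real"
  assumes "\<And>j. j \<in> J \<Longrightarrow> 0 \<le> a j" "\<And>j. j \<in> J \<Longrightarrow> 0 < p j"
  shows "(\<Sum>j\<in>J. a j * y j)^2 \<le> (\<Sum>j\<in>J. a j * p j) * (\<Sum>j\<in>J. a j * (y j)^2 / p j)"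
proof -
  have "(\<Sum>j\<in>J. a j * y j) = (\<Sum>j\<in>J. sqrt (a j * p j) * (sqrt (a j / p j) * y j))"
  proof (rule sum.cong)
    fix j assume "j \<in> J"
    hence "0 \<le> a j" "0 < p j"
      using assms by auto
    hence "sqrt (a j * p j) * sqrt (a j / p j) = a j"
      by (simp add: real_sqrt_mult[symmetric])
    thus "a j * y j = sqrt (a j * p j) * (sqrt (a j / p j) * y j)"
      by (simp add: mult.assoc[symmetric])
  qed simp
  also have "\<dots>^2 \<le> (\<Sum>j\<in>J. (sqrt (a j * p j))^2) * (\<Sum>j\<in>J. (sqrt (a j / p j) * y j)^2)"
    by (rule Cauchy_Schwarz_ineq_sum)
  also have "\<dots> = (\<Sum>j\<in>J. a j * p j) * (\<Sum>j\<in>J. a j * (y j)^2 / p j)"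
    using assms by (intro arg_cong2[where f = "(*)"] sum.cong) (auto simp: power_mult_distrib less_imp_le)
  finally show ?thesis .
qed

context
  fixes M :: "nat \<Rightarrow> nat \<Rightarrow> real" and p :: "nat \<Rightarrow> real" and c :: real
  assumes weight_pos: "\<And>j. 0 < p j" and c_nonneg: "0 \<le> c"
    and row_sum: "\<And>i F. finite F \<Longrightarrow> (\<Sum>j\<in>F. \<bar>M i j\<bar> * p j) \<le> c * p i"
    and col_sum: "\<And>j F. finite F \<Longrightarrow> (\<Sum>i\<in>F. \<bar>M i j\<bar> * p i) \<le> c * p j"
begin

lemma schur_test_finite:
  assumes "finite I" "finite J"
  shows "(\<Sum>i\<in>I. (\<Sum>j\<in>J. \<bar>M i j\<bar> * \<bar>x j\<bar>)^2) \<le> c^2 * (\<Sum>j\<in>J. (x j)^2)"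
proof -
  have "(\<Sum>j\<in>J. \<bar>M i j\<bar> * \<bar>x j\<bar>)^2 \<le> (c * p i) * (\<Sum>j\<in>J. \<bar>M i j\<bar> * (x j)^2 / p j)" for i
  proof -
    have "(\<Sum>j\<in>J. \<bar>M i j\<bar> * \<bar>x j\<bar>)^2 \<le> (\<Sum>j\<in>J. \<bar>M i j\<bar> * p j) * (\<Sum>j\<in>J. \<bar>M i j\<bar> * (x j)^2 / p j)"
      using weighted_Cauchy_Schwarz_sum[of J "\<lambda>j. \<bar>M i j\<bar>" p "\<lambda>j. \<bar>x j\<bar>"] weight_pos by simp
    also have "\<dots> \<le> (c * p i) * (\<Sum>j\<in>J. \<bar>M i j\<bar> * (x j)^2 / p j)"
      using weight_pos assms(2)
      by (intro mult_right_mono row_sum sum_nonneg) (auto intro!: divide_nonneg_pos)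
    finally show ?thesis .
  qed
  hence "(\<Sum>i\<in>I. (\<Sum>j\<in>J. \<bar>M i j\<bar> * \<bar>x j\<bar>)^2) \<le> (\<Sum>i\<in>I. (c * p i) * (\<Sum>j\<in>J. \<bar>M i j\<bar> * (x j)^2 / p j))"
    by (rule sum_mono)
  also have "\<dots> = c * (\<Sum>j\<in>J. ((x j)^2 / p j) * (\<Sum>i\<in>I. \<bar>M i j\<bar> * p i))"
    by (simp add: sum_distrib_left sum_distrib_right sum_divide_distrib sum.swap[of _ I J] mult_ac)
  also have "\<dots> \<le> c * (\<Sum>j\<in>J. ((x j)^2 / p j) * (c * p j))"
    using weight_pos c_nonneg assms(1)
    by (intro mult_left_mono sum_mono col_sum) (auto intro!: divide_nonneg_pos)
  also have "\<dots> = c^2 * (\<Sum>j\<in>J. (x j)^2)"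
    using weight_pos by (simp add: sum_distrib_left power2_eq_square mult_ac less_imp_neq[symmetric])
  finally show ?thesis .
qed

lemma schur_partial_sums_le:
  assumes "l2_seq x" "finite I"
  shows "(\<Sum>i\<in>I. (\<Sum>j<n. \<bar>M i j\<bar> * \<bar>x j\<bar>)^2) \<le> c^2 * l2_norm_sq x"
proof -
  have "(\<Sum>i\<in>I. (\<Sum>j<n. \<bar>M i j\<bar> * \<bar>x j\<bar>)^2) \<le> c^2 * (\<Sum>j<n. (x j)^2)"
    using assms(2) by (intro schur_test_finite) auto
  also have "\<dots> \<le> c^2 * l2_norm_sq x"
    using assms(1) unfolding l2_seq_def l2_norm_sq_def by (intro mult_left_mono sum_le_suminf) auto
  finally show ?thesis .
qed

lemma schur_row_summable:
  assumes "l2_seq x"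
  shows "summable (\<lambda>j. \<bar>M i j\<bar> * \<bar>x j\<bar>)"
proof (rule summableI_nonneg_bounded)
  fix n
  have "(\<Sum>j<n. \<bar>M i j\<bar> * \<bar>x j\<bar>)^2 \<le> c^2 * l2_norm_sq x"
    using schur_partial_sums_le[OF assms, of "{i}" n] by simp
  thus "(\<Sum>j<n. \<bar>M i j\<bar> * \<bar>x j\<bar>) \<le> sqrt (c^2 * l2_norm_sq x)"
    by (rule real_le_rsqrt)
qed simp

lemma schur_abs_rows_sum_sq_le:
  assumes "l2_seq x"
  shows "(\<Sum>i<N. (\<Sum>j. \<bar>M i j\<bar> * \<bar>x j\<bar>)^2) \<le> c^2 * l2_norm_sq x"
proof (rule LIMSEQ_le_const2)
  show "(\<lambda>n. \<Sum>i<N. (\<Sum>j<n. \<bar>M i j\<bar> * \<bar>x j\<bar>)^2) \<longlonglongrightarrow> (\<Sum>i<N. (\<Sum>j. \<bar>M i j\<bar> * \<bar>x j\<bar>)^2)"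
    using assms by (intro tendsto_intros summable_LIMSEQ schur_row_summable)
  show "\<exists>N'. \<forall>n\<ge>N'. (\<Sum>i<N. (\<Sum>j<n. \<bar>M i j\<bar> * \<bar>x j\<bar>)^2) \<le> c^2 * l2_norm_sq x"
    using schur_partial_sums_le[OF assms] by blast
qed

lemma l2_opnorm_le_schur: "l2_opnorm M \<le> ereal c"
  unfolding l2_opnorm_def
proof (rule Inf_lower, simp, intro exI conjI allI impI c_nonneg)
  fix x assume x: "l2_seq x"
  show "summable (\<lambda>j. M i j * x j)" for i
    by (rule summable_rabs_cancel) (use schur_row_summable[OF x, of i] in \<open>simp add: abs_mult\<close>)
  have "\<bar>mat_apply M x i\<bar> \<le> (\<Sum>j. \<bar>M i j\<bar> * \<bar>x j\<bar>)" for i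
    using summable_rabs[of "\<lambda>j. M i j * x j"] schur_row_summable[OF x, of i]
    by (simp add: mat_apply_def abs_mult)
  hence "(mat_apply M x i)^2 \<le> (\<Sum>j. \<bar>M i j\<bar> * \<bar>x j\<bar>)^2" for i
    using power_mono[of "\<bar>mat_apply M x i\<bar>" _ 2] by simp
  hence partial: "(\<Sum>i<N. (mat_apply M x i)^2) \<le> c^2 * l2_norm_sq x" for N
    by (rule order_trans[OF sum_mono schur_abs_rows_sum_sq_le[OF x]])
  have summable_sq: "summable (\<lambda>i. (mat_apply M x i)^2)"
    by (rule summableI_nonneg_bounded[OF _ partial]) simp
  thus "l2_seq (mat_apply M x)"
    by (simp add: l2_seq_def)
  have "l2_norm_sq (mat_apply M x) \<le> c^2 * l2_norm_sq x"
    unfolding l2_norm_sq_def by (rule suminf_le_const[OF summable_sq partial[unfolded l2_norm_sq_def]])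
  hence "sqrt (l2_norm_sq (mat_apply M x)) \<le> sqrt (c^2 * l2_norm_sq x)"
    by (rule real_sqrt_le_mono)
  thus "sqrt (l2_norm_sq (mat_apply M x)) \<le> c * sqrt (l2_norm_sq x)"
    using c_nonneg by (simp add: real_sqrt_mult)
qed

end

lemma sum_power_inj_ge_le:
  fixes \<rho> :: real
  assumes "0 \<le> \<rho>" "\<rho> < 1" "finite A" "inj_on f A" "\<And>a. a \<in> A \<Longrightarrow> r \<le> f a"
  shows "(\<Sum>a\<in>A. \<rho> ^ f a) \<le> \<rho> ^ r / (1 - \<rho>)"
proof -
  define N where "N = Max (insert r (f ` A))"
  have f_range: "f ` A \<subseteq> {r..N}"
    using assms(3,5) by (auto simp: N_def)
  have "(\<Sum>a\<in>A. \<rho> ^ f a) = (\<Sum>e\<in>f ` A. \<rho> ^ e)"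
    using assms(4) by (simp add: sum.reindex)
  also have "\<dots> \<le> (\<Sum>e=r..N. \<rho> ^ e)"
    using f_range assms(1) by (intro sum_mono2) auto
  also have "\<dots> = (\<rho> ^ r - \<rho> ^ Suc N) / (1 - \<rho>)"
    using sum_gp_multiplied[of r N \<rho>] assms(2,3) by (simp add: N_def field_simps)
  also have "\<dots> \<le> \<rho> ^ r / (1 - \<rho>)"
    using assms(1,2) by (simp add: divide_right_mono)
  finally show ?thesis .
qed

lemma sum_powr_abs_diff_gt_le:
  fixes q \<epsilon> :: real and l r :: nat
  assumes "0 < q" "q < 1" "0 < \<epsilon>" "finite K"
  shows "(\<Sum>k\<in>{k\<in>K. real r < \<bar>real l - real k\<bar>}. q powr (\<epsilon> * \<bar>real l - real k\<bar>))
    \<le> 2 * q powr (\<epsilon> * real r) / (1 - q powr \<epsilon>)"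
proof -
  define \<rho> where "\<rho> = q powr \<epsilon>"
  have \<rho>: "0 \<le> \<rho>" "\<rho> < 1"
    using assms(1-3) powr_less_mono2[of \<epsilon> q 1] by (auto simp: \<rho>_def)
  have powr_eq: "q powr (\<epsilon> * real n) = \<rho> ^ n" for n
    using assms(1) by (simp add: \<rho>_def powr_powr[symmetric] powr_realpow)
  define A where "A = {k\<in>K. l + r < k}"
  define B where "B = {k\<in>K. k + r < l}"
  have "{k\<in>K. real r < \<bar>real l - real k\<bar>} = A \<union> B"
    by (auto simp: A_def B_def)
  moreover have "q powr (\<epsilon> * \<bar>real l - real k\<bar>) = \<rho> ^ (k - l)" if "k \<in> A" for k
    using that powr_eq[of "k - l"] by (simp add: A_def of_nat_diff)
  moreover have "q powr (\<epsilon> * \<bar>real l - real k\<bar>) = \<rho> ^ (l - k)" if "k \<in> B" for k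
    using that powr_eq[of "l - k"] by (simp add: B_def of_nat_diff)
  moreover have "A \<inter> B = {}" "finite A" "finite B"
    using assms(4) by (auto simp: A_def B_def)
  ultimately have "(\<Sum>k\<in>{k\<in>K. real r < \<bar>real l - real k\<bar>}. q powr (\<epsilon> * \<bar>real l - real k\<bar>))
      = (\<Sum>k\<in>A. \<rho> ^ (k - l)) + (\<Sum>k\<in>B. \<rho> ^ (l - k))"
    by (simp add: sum.union_disjoint)
  also have "\<dots> \<le> \<rho> ^ r / (1 - \<rho>) + \<rho> ^ r / (1 - \<rho>)"
    using \<rho> assms(4)
    by (intro add_mono sum_power_inj_ge_le) (auto simp: A_def B_def inj_on_def)
  also have "\<rho> ^ r = q powr (\<epsilon> * real r)"
    by (simp add: powr_eq)
  finally show ?thesis by (simp add: \<rho>_def)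
qed

lemma block_weighted_sum_le:
  fixes M :: "nat \<Rightarrow> nat \<Rightarrow> real" and blk :: "nat \<Rightarrow> nat" and C q \<epsilon> :: real
  assumes "0 < q" "0 \<le> C" "finite F"
    and entry: "\<And>j. \<bar>M i j\<bar> \<le> C * q powr ((1/2 + \<epsilon>) * \<bar>real (blk i) - real (blk j)\<bar>)"
    and count_finite: "finite {j. blk j = k \<and> M i j \<noteq> 0}"
    and count: "real (card {j. blk j = k \<and> M i j \<noteq> 0}) \<le> C * q powr (real (min k (blk i)) - real k)"
  shows "(\<Sum>j\<in>{j\<in>F. blk j = k}. \<bar>M i j\<bar> * q powr (real k / 2))
    \<le> C^2 * q powr (\<epsilon> * \<bar>real (blk i) - real k\<bar>) * q powr (real (blk i) / 2)"
proof -
  define l where "l = blk i"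
  define S where "S = {j\<in>F. blk j = k \<and> M i j \<noteq> 0}"
  define b where "b = C * q powr ((1/2 + \<epsilon>) * \<bar>real l - real k\<bar>) * q powr (real k / 2)"
  have b_nonneg: "0 \<le> b"
    using assms(2) by (simp add: b_def)
  have "(\<Sum>j\<in>{j\<in>F. blk j = k}. \<bar>M i j\<bar> * q powr (real k / 2)) = (\<Sum>j\<in>S. \<bar>M i j\<bar> * q powr (real k / 2))"
    using assms(3) by (intro sum.mono_neutral_right) (auto simp: S_def)
  also have "\<dots> \<le> real (card S) * b"
    using entry by (intro sum_bounded_above) (auto simp: S_def b_def l_def intro!: mult_right_mono)
  also have "\<dots> \<le> real (card {j. blk j = k \<and> M i j \<noteq> 0}) * b"
    using count_finite b_nonneg by (intro mult_right_mono) (auto intro!: card_mono simp: S_def)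
  also have "\<dots> \<le> C * q powr (real (min k l) - real k) * b"
    using count b_nonneg by (intro mult_right_mono) (simp_all add: l_def)
  also have "\<dots> = C^2 * q powr (real (min k l) - real k + (1/2 + \<epsilon>) * \<bar>real l - real k\<bar> + real k / 2)"
    unfolding b_def powr_add power2_eq_square by (simp only: mult_ac)
  also have "real (min k l) - real k + (1/2 + \<epsilon>) * \<bar>real l - real k\<bar> + real k / 2
      = \<epsilon> * \<bar>real l - real k\<bar> + real l / 2"
    by (cases "k \<le> l") (auto simp: min_def field_simps abs_if)
  finally show ?thesis
    by (simp add: powr_add l_def mult_ac)
qed

lemma row_weighted_sum_le:
  fixes M :: "nat \<Rightarrow> nat \<Rightarrow> real" and blk :: "nat \<Rightarrow> nat" and C q \<epsilon> :: real
  assumes "0 < q" "q < 1" "0 \<le> C" "0 < \<epsilon>" "finite F"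
    and entry: "\<And>j. \<bar>M i j\<bar> \<le> C * q powr ((1/2 + \<epsilon>) * \<bar>real (blk i) - real (blk j)\<bar>)"
    and count_finite: "\<And>k. finite {j. blk j = k \<and> M i j \<noteq> 0}"
    and count: "\<And>k. real (card {j. blk j = k \<and> M i j \<noteq> 0}) \<le> C * q powr (real (min k (blk i)) - real k)"
    and band: "\<And>j. \<bar>real (blk i) - real (blk j)\<bar> \<le> real r \<Longrightarrow> M i j = 0"
  shows "(\<Sum>j\<in>F. \<bar>M i j\<bar> * q powr (real (blk j) / 2))
    \<le> 2 * C^2 / (1 - q powr \<epsilon>) * q powr (\<epsilon> * real r) * q powr (real (blk i) / 2)"
proof -
  define l where "l = blk i"
  define K where "K = blk ` F"
  define far where "far k \<longleftrightarrow> real r < \<bar>real l - real k\<bar>" for k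
  define c where "c = C^2 * q powr (real l / 2)"
  have block: "(\<Sum>j\<in>{j\<in>F. blk j = k}. \<bar>M i j\<bar> * q powr (real (blk j) / 2))
      \<le> (if far k then c * q powr (\<epsilon> * \<bar>real l - real k\<bar>) else 0)" for k
  proof (cases "far k")
    case True
    have "(\<Sum>j\<in>{j\<in>F. blk j = k}. \<bar>M i j\<bar> * q powr (real (blk j) / 2))
        = (\<Sum>j\<in>{j\<in>F. blk j = k}. \<bar>M i j\<bar> * q powr (real k / 2))"
      by (intro sum.cong) auto
    also have "\<dots> \<le> c * q powr (\<epsilon> * \<bar>real l - real k\<bar>)"
      using block_weighted_sum_le[where M = M and i = i and blk = blk and k = k, OF assms(1,3,5) entry count_finite count]
      by (simp add: c_def l_def mult_ac)
    finally show ?thesis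
      using True by simp
  next
    case False
    thus ?thesis
      using band by (simp add: far_def l_def)
  qed
  have "(\<Sum>j\<in>F. \<bar>M i j\<bar> * q powr (real (blk j) / 2))
      = (\<Sum>k\<in>K. \<Sum>j\<in>{j\<in>F. blk j = k}. \<bar>M i j\<bar> * q powr (real (blk j) / 2))"
    unfolding K_def using assms(5) by (intro sum.group[symmetric]) auto
  also have "\<dots> \<le> (\<Sum>k\<in>K. if far k then c * q powr (\<epsilon> * \<bar>real l - real k\<bar>) else 0)"
    by (intro sum_mono block)
  also have "\<dots> = c * (\<Sum>k\<in>{k\<in>K. real r < \<bar>real l - real k\<bar>}. q powr (\<epsilon> * \<bar>real l - real k\<bar>))"
    using assms(5) by (auto simp: K_def far_def sum.inter_filter sum_distrib_left intro!: sum.cong)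
  also have "\<dots> \<le> c * (2 * q powr (\<epsilon> * real r) / (1 - q powr \<epsilon>))"
    using assms(1,2,4,5)
    by (intro mult_left_mono sum_powr_abs_diff_gt_le) (simp_all add: K_def c_def)
  finally show ?thesis
    by (simp add: c_def l_def mult_ac)
qed

lemma l2_opnorm_block_decay_le:
  fixes M :: "nat \<Rightarrow> nat \<Rightarrow> real" and blk :: "nat \<Rightarrow> nat" and C q \<epsilon> :: real
  assumes "0 < q" "q < 1" "0 \<le> C" "0 < \<epsilon>"
    and entry: "\<And>i j. \<bar>M i j\<bar> \<le> C * q powr ((1/2 + \<epsilon>) * \<bar>real (blk i) - real (blk j)\<bar>)"
    and row_count_finite: "\<And>i k. finite {j. blk j = k \<and> M i j \<noteq> 0}"
    and row_count: "\<And>i k. real (card {j. blk j = k \<and> M i j \<noteq> 0}) \<le> C * q powr (real (min k (blk i)) - real k)"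
    and col_count_finite: "\<And>j l. finite {i. blk i = l \<and> M i j \<noteq> 0}"
    and col_count: "\<And>j l. real (card {i. blk i = l \<and> M i j \<noteq> 0}) \<le> C * q powr (real (min (blk j) l) - real l)"
    and band: "\<And>i j. \<bar>real (blk i) - real (blk j)\<bar> \<le> real r \<Longrightarrow> M i j = 0"
  shows "l2_opnorm M \<le> ereal (2 * C^2 / (1 - q powr \<epsilon>) * q powr (\<epsilon> * real r))"
proof (rule l2_opnorm_le_schur[where p = "\<lambda>j. q powr (real (blk j) / 2)"])
  show "0 < q powr (real (blk j) / 2)" for j
    using assms(1) by simp
  have "q powr \<epsilon> < 1"
    using assms(1,2,4) powr_less_mono2[of \<epsilon> q 1] by simp
  thus "0 \<le> 2 * C^2 / (1 - q powr \<epsilon>) * q powr (\<epsilon> * real r)"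
    by simp
  show "(\<Sum>j\<in>F. \<bar>M i j\<bar> * q powr (real (blk j) / 2))
      \<le> 2 * C^2 / (1 - q powr \<epsilon>) * q powr (\<epsilon> * real r) * q powr (real (blk i) / 2)"
    if "finite F" for i F
    using assms(1-4) that entry row_count_finite row_count band by (rule row_weighted_sum_le)
  show "(\<Sum>i\<in>F. \<bar>M i j\<bar> * q powr (real (blk i) / 2))
      \<le> 2 * C^2 / (1 - q powr \<epsilon>) * q powr (\<epsilon> * real r) * q powr (real (blk j) / 2)"
    if "finite F" for j F
  proof (rule row_weighted_sum_le[where M = "\<lambda>j i. M i j"])
    show "\<bar>M i' j'\<bar> \<le> C * q powr ((1/2 + \<epsilon>) * \<bar>real (blk j') - real (blk i')\<bar>)" for i' j'
      using entry[of i' j'] by (simp add: abs_minus_commute)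
    show "real (card {i. blk i = k \<and> M i j' \<noteq> 0}) \<le> C * q powr (real (min k (blk j')) - real k)" for j' k
      using col_count[where j = j' and l = k] by (simp add: min.commute)
    show "M i' j' = 0" if "\<bar>real (blk j') - real (blk i')\<bar> \<le> real r" for i' j'
      using band[of i' j'] that by (simp add: abs_minus_commute)
  qed (use assms(1-4) that col_count_finite in auto)
qed

theorem lemma8p3:
  fixes C q \<epsilon> :: real
  assumes "0 < q" and "q < 1" and "C > 0" and "\<epsilon> > 0"
  shows "\<exists>Cgeo > 0. \<forall>(M :: nat \<Rightarrow> nat \<Rightarrow> real) (blk :: nat \<Rightarrow> nat) (r :: nat).
    ((\<forall>i j. \<bar>M i j\<bar> \<le> C * q powr ((1/2 + \<epsilon>) * \<bar>real (blk i) - real (blk j)\<bar>)) \<and>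
     (\<forall>i k. finite {j. blk j = k \<and> M i j \<noteq> 0} \<and>
        real (card {j. blk j = k \<and> M i j \<noteq> 0})
          \<le> C * q powr (real (min k (blk i)) - real k)) \<and>
     (\<forall>j l. finite {i. blk i = l \<and> M i j \<noteq> 0} \<and>
        real (card {i. blk i = l \<and> M i j \<noteq> 0})
          \<le> C * q powr (real (min (blk j) l) - real l)) \<and>
     (\<forall>i j. \<bar>real (blk i) - real (blk j)\<bar> \<le> real r \<longrightarrow> M i j = 0))
    \<longrightarrow> l2_opnorm M \<le> ereal (Cgeo * q powr (\<epsilon> * real r))"
proof (intro exI[of _ "2 * C^2 / (1 - q powr \<epsilon>)"] conjI allI impI)
  have "q powr \<epsilon> < 1"
    using assms powr_less_mono2[of \<epsilon> q 1] by simp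
  thus "0 < 2 * C^2 / (1 - q powr \<epsilon>)"
    using assms(3) by simp
qed (elim conjE, rule l2_opnorm_block_decay_le, use assms in auto)

end
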